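(* Let $f,g_1,\dots,g_m,h_1,\dots,h_l\in\mathbb{R}[\mathbf{x}]$ with correlative sparsity data $(I_j,J_j,W_j)_{j\in[p]}$ as in the context. If for every integer $k\ge k_{\min}$ and every $j\in[p]$ the linear program $(\mathrm{LP}_{k,j})$ has a feasible solution $(\xi^{(j)}_k,(\mathbf{G}^{(j)}_{i,k})_{i\in\{0\}\cup J_j},(\mathbf{u}^{(j)}_{i,k})_{i\in W_j})$, then the POP of minimizing $f$ over $S(g)\cap V(h)$ has the constant trace property with correlative sparsity, with $\mathbf{P}^{(j)}_k=\mathrm{diag}((\mathbf{G}^{(j)}_{0,k})^{1/2},((\mathbf{G}^{(j)}_{i,k})^{1/2})_{i\in J_j})$ and $a^{(j)}_k=\xi^{(j)}_k$ for all $k\ge k_{\min}$ and $j\in[p]$.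
   Context: $\mathbf{x}=(x_1,\dots,x_n)$; $\mathbf{x}(I)=(x_i)_{i\in I}$; $\lceil p\rceil:=\lceil\deg(p)/2\rceil$; $k_{\min}:=\max\{\lceil f\rceil,\lceil g_i\rceil,\lceil h_j\rceil\}$; $S(g)=\{\mathbf{x}:g_i(\mathbf{x})\ge0\}$, $V(h)=\{\mathbf{x}:h_j(\mathbf{x})=0\}$. Sparsity data: $I_1,\dots,I_p\subseteq[n]$; $\{J_j\}$ a partition of $[m]$, $\{W_j\}$ a partition of $[l]$ with $g_i\in\mathbb{R}[\mathbf{x}(I_j)]$ ($i\in J_j$), $h_i\in\mathbb{R}[\mathbf{x}(I_j)]$ ($i\in W_j$). $\mathbb{N}^I_d:=\{\alpha\in\mathbb{N}^n:|\alpha|\le d,\mathrm{supp}(\alpha)\subseteq I\}$, $\mathbf{v}^I_d=(\mathbf{x}^\alpha)_{\alpha\in\mathbb{N}^I_d}$. $(\mathrm{LP}_{k,j})$: minimize $\xi$ over $\xi\in\mathbb{R}$, real diagonal $\mathbf{G}_0$ of size $|\mathbb{N}^{I_j}_k|$, real diagonal $\mathbf{G}_i$ of size $|\mathbb{N}^{I_j}_{k-\lceil g_i\rceil}|$ ($i\in J_j$), vectors $\mathbf{u}_i$ ($i\in W_j$) of length $|\mathbb{N}^{I_j}_{2(k-\lceil h_i\rceil)}|$, subject to $\mathbf{G}_i-\mathbf{I}\succeq0$ for $i\in\{0\}\cup J_j$ and the polynomial identity $\xi=(\mathbf{v}^{I_j}_k)^\top\mathbf{G}_0\mathbf{v}^{I_j}_k+\sum_{i\in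 J_j}g_i(\mathbf{v}^{I_j}_{k-\lceil g_i\rceil})^\top\mathbf{G}_i\mathbf{v}^{I_j}_{k-\lceil g_i\rceil}+\sum_{i\in W_j}h_i(\mathbf{v}^{I_j}_{2(k-\lceil h_i\rceil)})^\top\mathbf{u}_i$. For $\mathbf{y}=(y_\alpha)_{\alpha\in\mathbb{N}^n_{2k}}$: $\mathbf{M}_d(\mathbf{y},I)=(y_{\alpha+\beta})_{\alpha,\beta\in\mathbb{N}^I_d}$, $\mathbf{M}_d(q\mathbf{y},I)=(\sum_\gamma q_\gamma y_{\alpha+\beta+\gamma})_{\alpha,\beta\in\mathbb{N}^I_d}$; $\mathbf{D}_k(\mathbf{y},I_j):=\mathrm{diag}(\mathbf{M}_k(\mathbf{y},I_j),(\mathbf{M}_{k-\lceil g_i\rceil}(g_i\mathbf{y},I_j))_{i\in J_j})$. CTP with correlative sparsity with data $(a^{(j)}_k,\mathbf{P}^{(j)}_k)$ ($a^{(j)}_k>0$, $\mathbf{P}^{(j)}_k$ positive definite with the block structure of $\mathbf{D}_k(\mathbf{y},I_j)$) means: for all $k\ge k_{\min}$, $j\in[p]$, every $\mathbf{y}$ with $\mathbf{M}_{k-\lceil h_i\rceil}(h_i\mathbf{y},I_j)=0$ ($i\in W_j$) and $y_{\mathbf{0}}=1$ satisfies $\mathrm{trace}(\mathbf{P}^{(j)}_k\mathbf{D}_k(\mathbf{y},I_j)\mathbf{P}^{(j)}_k)=a^{(j)}_k$. *)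

theory Defs
  imports Complex_Main "HOL-Library.Poly_Mapping"
begin

text \<open>Multivariate real polynomials in the variables x_0, x_1, ... are represented
  as finitely supported maps from exponent vectors (monomials) to coefficients.
  Multiplication is the convolution product of Poly_Mapping.\<close>

type_synonym mon = "nat \<Rightarrow>\<^sub>0 nat"
type_synonym rpoly = "mon \<Rightarrow>\<^sub>0 real"

definition mdeg :: "mon \<Rightarrow> nat" where
  "mdeg \<alpha> = (\<Sum>i\<in>Poly_Mapping.keys \<alpha>. Poly_Mapping.lookup \<alpha> i)"

definition pdeg :: "rpoly \<Rightarrow> nat" where
  "pdeg q = Max (insert 0 (mdeg ` Poly_Mapping.keys q))"

definition hdeg :: "rpoly \<Rightarrow> nat" where
  "hdeg q = (pdeg q + 1) div 2"

definition pvars :: "rpoly \<Rightarrow> nat set" where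
  "pvars q = (\<Union>\<alpha>\<in>Poly_Mapping.keys q. Poly_Mapping.keys \<alpha>)"

definition pconst :: "real \<Rightarrow> rpoly" where
  "pconst c = Poly_Mapping.single 0 c"

definition peval :: "rpoly \<Rightarrow> (nat \<Rightarrow> real) \<Rightarrow> real" where
  "peval q x = (\<Sum>\<alpha>\<in>Poly_Mapping.keys q. Poly_Mapping.lookup q \<alpha> * (\<Prod>i\<in>Poly_Mapping.keys \<alpha>. x i ^ Poly_Mapping.lookup \<alpha> i))"

definition Nset :: "nat set \<Rightarrow> nat \<Rightarrow> mon set" where
  "Nset I d = {\<alpha>. mdeg \<alpha> \<le> d \<and> Poly_Mapping.keys \<alpha> \<subseteq> I}"

definition mmult :: "'a set \<Rightarrow> ('a \<Rightarrow> 'a \<Rightarrow> real) \<Rightarrow> ('a \<Rightarrow> 'a \<Rightarrow> real) \<Rightarrow> ('a \<Rightarrow> 'a \<Rightarrow> real)" where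
  "mmult S A B = (\<lambda>a c. \<Sum>b\<in>S. A a b * B b c)"

definition mtrace :: "'a set \<Rightarrow> ('a \<Rightarrow> 'a \<Rightarrow> real) \<Rightarrow> real" where
  "mtrace S A = (\<Sum>a\<in>S. A a a)"

definition msym :: "'a set \<Rightarrow> ('a \<Rightarrow> 'a \<Rightarrow> real) \<Rightarrow> bool" where
  "msym S A \<longleftrightarrow> (\<forall>a\<in>S. \<forall>b\<in>S. A a b = A b a)"

definition qform :: "'a set \<Rightarrow> ('a \<Rightarrow> 'a \<Rightarrow> real) \<Rightarrow> ('a \<Rightarrow> real) \<Rightarrow> real" where
  "qform S A v = (\<Sum>a\<in>S. \<Sum>b\<in>S. v a * A a b * v b)"

definition psd :: "'a set \<Rightarrow> ('a \<Rightarrow> 'a \<Rightarrow> real) \<Rightarrow> bool" where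
  "psd S A \<longleftrightarrow> msym S A \<and> (\<forall>v. qform S A v \<ge> 0)"

definition pdef :: "'a set \<Rightarrow> ('a \<Rightarrow> 'a \<Rightarrow> real) \<Rightarrow> bool" where
  "pdef S A \<longleftrightarrow> msym S A \<and> (\<forall>v. (\<exists>a\<in>S. v a \<noteq> 0) \<longrightarrow> qform S A v > 0)"

definition mdiagonal :: "'a set \<Rightarrow> ('a \<Rightarrow> 'a \<Rightarrow> real) \<Rightarrow> bool" where
  "mdiagonal S A \<longleftrightarrow> (\<forall>a\<in>S. \<forall>b\<in>S. a \<noteq> b \<longrightarrow> A a b = 0)"

definition msqrt :: "'a set \<Rightarrow> ('a \<Rightarrow> 'a \<Rightarrow> real) \<Rightarrow> ('a \<Rightarrow> 'a \<Rightarrow> real)" where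
  "msqrt S A = (THE R. psd S R \<and> (\<forall>a\<in>S. \<forall>b\<in>S. mmult S R R a b = A a b)
                       \<and> (\<forall>a b. a \<notin> S \<or> b \<notin> S \<longrightarrow> R a b = 0))"

text \<open>Polynomials v^T G v and v^T u built from the monomial vector indexed by S.\<close>
definition qpoly :: "mon set \<Rightarrow> (mon \<Rightarrow> mon \<Rightarrow> real) \<Rightarrow> rpoly" where
  "qpoly S G = (\<Sum>\<alpha>\<in>S. \<Sum>\<beta>\<in>S. Poly_Mapping.single (\<alpha> + \<beta>) (G \<alpha> \<beta>))"

definition lpoly :: "mon set \<Rightarrow> (mon \<Rightarrow> real) \<Rightarrow> rpoly" where
  "lpoly S u = (\<Sum>\<alpha>\<in>S. Poly_Mapping.single \<alpha> (u \<alpha>))"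

definition moment_mat :: "(mon \<Rightarrow> real) \<Rightarrow> mon \<Rightarrow> mon \<Rightarrow> real" where
  "moment_mat y \<alpha> \<beta> = y (\<alpha> + \<beta>)"

definition loc_mat :: "rpoly \<Rightarrow> (mon \<Rightarrow> real) \<Rightarrow> mon \<Rightarrow> mon \<Rightarrow> real" where
  "loc_mat q y \<alpha> \<beta> = (\<Sum>\<gamma>\<in>Poly_Mapping.keys q. Poly_Mapping.lookup q \<gamma> * y (\<alpha> + \<beta> + \<gamma>))"

definition kmin :: "rpoly \<Rightarrow> (nat \<Rightarrow> rpoly) \<Rightarrow> nat \<Rightarrow> (nat \<Rightarrow> rpoly) \<Rightarrow> nat \<Rightarrow> nat" where
  "kmin f g m h l = Max ({hdeg f} \<union> hdeg ` g ` {..<m} \<union> hdeg ` h ` {..<l})"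

text \<open>Blocks of D_k(y,I_j): block None is the moment matrix, block Some i the
  localizing matrix of g_i (i in J_j).\<close>
definition blocks :: "nat set \<Rightarrow> nat option set" where
  "blocks Jj = insert None (Some ` Jj)"

definition bdeg :: "(nat \<Rightarrow> rpoly) \<Rightarrow> nat \<Rightarrow> nat option \<Rightarrow> nat" where
  "bdeg g k b = (case b of None \<Rightarrow> k | Some i \<Rightarrow> k - hdeg (g i))"

definition bidx :: "(nat \<Rightarrow> rpoly) \<Rightarrow> nat set \<Rightarrow> nat set \<Rightarrow> nat \<Rightarrow> nat option \<Rightarrow> mon set" where
  "bidx g Ij Jj k b = Nset Ij (bdeg g k b)"

definition didx :: "(nat \<Rightarrow> rpoly) \<Rightarrow> nat set \<Rightarrow> nat set \<Rightarrow> nat \<Rightarrow> (nat option \<times> mon) set" where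
  "didx g Ij Jj k = {(b, \<alpha>). b \<in> blocks Jj \<and> \<alpha> \<in> bidx g Ij Jj k b}"

definition blockdiag :: "(nat option \<Rightarrow> mon \<Rightarrow> mon \<Rightarrow> real) \<Rightarrow> (nat option \<times> mon) \<Rightarrow> (nat option \<times> mon) \<Rightarrow> real" where
  "blockdiag B = (\<lambda>(b, \<alpha>) (b', \<beta>). if b = b' then B b \<alpha> \<beta> else 0)"

definition Dmat :: "(nat \<Rightarrow> rpoly) \<Rightarrow> (mon \<Rightarrow> real) \<Rightarrow> (nat option \<times> mon) \<Rightarrow> (nat option \<times> mon) \<Rightarrow> real" where
  "Dmat g y = blockdiag (\<lambda>b. case b of None \<Rightarrow> moment_mat y | Some i \<Rightarrow> loc_mat (g i) y)"

text \<open>Feasibility of (LP_{k,j}) at (xi, G, u): G b is the (diagonal) matrix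
  G_0 (b = None) or G_i (b = Some i), u i the vector u_i.\<close>
definition lp_feasible ::
  "(nat \<Rightarrow> rpoly) \<Rightarrow> (nat \<Rightarrow> rpoly) \<Rightarrow> nat set \<Rightarrow> nat set \<Rightarrow> nat set \<Rightarrow> nat \<Rightarrow>
   real \<Rightarrow> (nat option \<Rightarrow> mon \<Rightarrow> mon \<Rightarrow> real) \<Rightarrow> (nat \<Rightarrow> mon \<Rightarrow> real) \<Rightarrow> bool" where
  "lp_feasible g h Ij Jj Wj k \<xi> G u \<longleftrightarrow>
     (\<forall>b\<in>blocks Jj. mdiagonal (bidx g Ij Jj k b) (G b)
        \<and> psd (bidx g Ij Jj k b) (\<lambda>\<alpha> \<beta>. G b \<alpha> \<beta> - (if \<alpha> = \<beta> then 1 else 0))) \<and>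
     pconst \<xi> = qpoly (Nset Ij k) (G None)
        + (\<Sum>i\<in>Jj. g i * qpoly (Nset Ij (k - hdeg (g i))) (G (Some i)))
        + (\<Sum>i\<in>Wj. h i * lpoly (Nset Ij (2 * (k - hdeg (h i)))) (u i))"

definition ctp_cs ::
  "rpoly \<Rightarrow> (nat \<Rightarrow> rpoly) \<Rightarrow> nat \<Rightarrow> (nat \<Rightarrow> rpoly) \<Rightarrow> nat \<Rightarrow> nat \<Rightarrow>
   (nat \<Rightarrow> nat set) \<Rightarrow> (nat \<Rightarrow> nat set) \<Rightarrow> (nat \<Rightarrow> nat set) \<Rightarrow>
   (nat \<Rightarrow> nat \<Rightarrow> real) \<Rightarrow>
   (nat \<Rightarrow> nat \<Rightarrow> (nat option \<times> mon) \<Rightarrow> (nat option \<times> mon) \<Rightarrow> real) \<Rightarrow> bool" where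
  "ctp_cs f g m h l p I J W a P \<longleftrightarrow>
     (\<forall>k \<ge> kmin f g m h l. \<forall>j<p.
        a k j > 0
      \<and> pdef (didx g (I j) (J j) k) (P k j)
      \<and> (\<forall>x\<in>didx g (I j) (J j) k. \<forall>z\<in>didx g (I j) (J j) k. fst x \<noteq> fst z \<longrightarrow> P k j x z = 0)
      \<and> (\<forall>y. (\<forall>i\<in>W j. \<forall>\<alpha>\<in>Nset (I j) (k - hdeg (h i)). \<forall>\<beta>\<in>Nset (I j) (k - hdeg (h i)).
                 loc_mat (h i) y \<alpha> \<beta> = 0) \<longrightarrow> y 0 = 1 \<longrightarrow>
             mtrace (didx g (I j) (J j) k)
               (mmult (didx g (I j) (J j) k)
                  (mmult (didx g (I j) (J j) k) (P k j) (Dmat g y)) (P k j)) = a k j))"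

end

theory Submission
  imports Defs
begin

text \<open>Apply the Riesz functional L_y, which maps x^alpha to y_alpha, to the polynomial identity
  of (LP_{k,j}). Since every G_i is diagonal, L_y of the term g_i v^T G_i v is the weighted diagonal
  sum of the localizing matrix M(g_i y), and the terms h_i v^T u_i vanish: a monomial of degree
  at most 2(k - ceil h_i) splits as a product of two monomials of degree at most k - ceil h_i, so
  L_y(h_i x^alpha) is an entry of M(h_i y) = 0. Hence xi y_0 = sum of G_b(alpha,alpha) times the
  diagonal entries of D_k(y). As G_b - I is psd and diagonal, the psd square root of G_b is its
  entrywise square root, so P D P has exactly that trace, which is xi when y_0 = 1. Positivity of
  xi follows by taking for y the moments of a point of S(g) and V(h): then every diagonal entry
  of D_k(y) is nonnegative and the (0,0) entry of the moment matrix is 1, so xi >= G_0(0,0) >= 1.\<close>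

definition riesz :: "(mon \<Rightarrow> real) \<Rightarrow> rpoly \<Rightarrow> real" where
  "riesz y q = (\<Sum>\<gamma>\<in>Poly_Mapping.keys q. Poly_Mapping.lookup q \<gamma> * y \<gamma>)"

lemma riesz_add: "riesz y (p + q) = riesz y p + riesz y q"
  unfolding riesz_def by (rule setsum_keys_plus_distrib) (simp_all add: distrib_right)

lemma riesz_zero [simp]: "riesz y 0 = 0"
  by (simp add: riesz_def)

lemma riesz_sum: "riesz y (\<Sum>a\<in>A. F a) = (\<Sum>a\<in>A. riesz y (F a))"
  by (induction A rule: infinite_finite_induct) (simp_all add: riesz_add)

lemma riesz_single [simp]: "riesz y (Poly_Mapping.single \<alpha> c) = c * y \<alpha>"
  by (simp add: riesz_def)

lemma riesz_pconst [simp]: "riesz y (pconst c) = c * y 0"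
  by (simp add: pconst_def)

lemma riesz_one [simp]: "riesz y 1 = y 0"
  by (simp add: riesz_def)

lemma sum_single_lookup:
  "(\<Sum>\<gamma>\<in>Poly_Mapping.keys q. Poly_Mapping.single \<gamma> (Poly_Mapping.lookup q \<gamma>)) = q"
  by (rule poly_mapping_eqI)
    (simp add: lookup_sum lookup_single when_def not_in_keys_iff_lookup_eq_zero)

lemma riesz_mult_single:
  "riesz y (q * Poly_Mapping.single \<delta> c) = c * loc_mat q y \<delta> 0"
proof -
  have "q * Poly_Mapping.single \<delta> c =
      (\<Sum>\<gamma>\<in>Poly_Mapping.keys q. Poly_Mapping.single (\<gamma> + \<delta>) (Poly_Mapping.lookup q \<gamma> * c))"
    by (subst (1) sum_single_lookup [symmetric]) (simp add: sum_distrib_right mult_single)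
  then show ?thesis
    by (simp add: riesz_sum loc_mat_def sum_distrib_left algebra_simps)
qed

lemma riesz_mult_qpoly:
  "riesz y (q * qpoly N G) = (\<Sum>\<alpha>\<in>N. \<Sum>\<beta>\<in>N. G \<alpha> \<beta> * loc_mat q y \<alpha> \<beta>)"
  by (simp add: qpoly_def sum_distrib_left riesz_sum riesz_mult_single loc_mat_def add_ac)

lemma riesz_mult_lpoly:
  "riesz y (q * lpoly N u) = (\<Sum>\<alpha>\<in>N. u \<alpha> * loc_mat q y \<alpha> 0)"
  by (simp add: lpoly_def sum_distrib_left riesz_sum riesz_mult_single)

lemma loc_mat_one [simp]: "loc_mat 1 y = moment_mat y"
  by (simp add: loc_mat_def moment_mat_def fun_eq_iff)

lemma loc_mat_add_zero: "loc_mat q y (\<alpha> + \<beta>) 0 = loc_mat q y \<alpha> \<beta>"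
  by (simp add: loc_mat_def)

lemma mdeg_add: "mdeg (\<alpha> + \<beta>) = mdeg \<alpha> + mdeg \<beta>"
  unfolding mdeg_def by (rule setsum_keys_plus_distrib [where f = "\<lambda>_ c. c"]) simp_all

lemma lookup_le_mdeg: "Poly_Mapping.lookup \<alpha> i \<le> mdeg \<alpha>"
  by (cases "i \<in> Poly_Mapping.keys \<alpha>")
    (auto simp: mdeg_def not_in_keys_iff_lookup_eq_zero intro: member_le_sum)

lemma keys_add_mon: "Poly_Mapping.keys (\<alpha> + \<beta> :: mon) = Poly_Mapping.keys \<alpha> \<union> Poly_Mapping.keys \<beta>"
  by (auto simp: in_keys_iff lookup_add)

lemma mon_remove_var:
  fixes \<alpha> :: mon
  assumes "i \<in> Poly_Mapping.keys \<alpha>"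
  shows "\<alpha> = (\<alpha> - Poly_Mapping.single i 1) + Poly_Mapping.single i 1"
proof (rule poly_mapping_eqI)
  fix j
  have "1 \<le> Poly_Mapping.lookup \<alpha> i"
    using assms by (simp add: in_keys_iff Suc_le_eq)
  then show "Poly_Mapping.lookup \<alpha> j =
      Poly_Mapping.lookup (\<alpha> - Poly_Mapping.single i 1 + Poly_Mapping.single i 1) j"
    by (cases "j = i") (simp_all add: lookup_add lookup_minus lookup_single)
qed

lemma mdeg_le_double_split:
  "mdeg \<alpha> \<le> 2 * d \<Longrightarrow> \<exists>\<beta> \<gamma>. \<alpha> = \<beta> + \<gamma> \<and> mdeg \<beta> \<le> d \<and> mdeg \<gamma> \<le> d"
proof (induction "mdeg \<alpha>" arbitrary: \<alpha>)
  case 0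
  have "\<alpha> = \<alpha> + 0" "mdeg (0::mon) = 0"
    by (simp_all add: mdeg_def)
  with "0" show ?case
    by (metis le0)
next
  case (Suc n)
  then have "\<alpha> \<noteq> 0"
    by (metis mdeg_def keys_zero sum.empty nat.distinct(1))
  then obtain i where "i \<in> Poly_Mapping.keys \<alpha>"
    by (metis keys_eq_empty ex_in_conv)
  define e where "e = (Poly_Mapping.single i 1 :: mon)"
  define \<alpha>' where "\<alpha>' = \<alpha> - e"
  have \<alpha>: "\<alpha> = \<alpha>' + e"
    using mon_remove_var [OF \<open>i \<in> _\<close>] by (simp add: \<alpha>'_def e_def)
  have e: "mdeg e = 1"
    by (simp add: e_def mdeg_def)
  with \<alpha> have deg: "mdeg \<alpha> = mdeg \<alpha>' + 1"
    by (metis mdeg_add)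
  then obtain \<beta> \<gamma> where \<alpha>': "\<alpha>' = \<beta> + \<gamma>" "mdeg \<beta> \<le> d" "mdeg \<gamma> \<le> d"
    using Suc by fastforce
  have "mdeg \<beta> + mdeg \<gamma> + 1 \<le> 2 * d"
    using Suc.prems deg \<alpha>' by (simp add: mdeg_add)
  then have "mdeg (\<beta> + e) \<le> d \<or> mdeg (\<gamma> + e) \<le> d"
    unfolding mdeg_add e by linarith
  moreover have "\<alpha> = (\<beta> + e) + \<gamma>" "\<alpha> = \<beta> + (\<gamma> + e)"
    using \<alpha> \<alpha>' by (simp_all add: add_ac)
  ultimately show ?case
    using \<alpha>' by blast
qed

lemma Nset_double_split:
  assumes "\<alpha> \<in> Nset I (2 * d)"
  obtains \<beta> \<gamma> where "\<alpha> = \<beta> + \<gamma>" "\<beta> \<in> Nset I d" "\<gamma> \<in> Nset I d"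
  using assms mdeg_le_double_split [of \<alpha> d] by (auto simp: Nset_def keys_add_mon)

lemma finite_Nset:
  assumes "finite I"
  shows "finite (Nset I d)"
proof -
  let ?F = "{f. \<forall>x. (x \<in> I \<longrightarrow> f x \<in> {..d}) \<and> (x \<notin> I \<longrightarrow> f x = (0::nat))}"
  have "Poly_Mapping.lookup ` Nset I d \<subseteq> ?F"
    by (auto simp: Nset_def not_in_keys_iff_lookup_eq_zero intro: order_trans [OF lookup_le_mdeg])
  moreover have "finite ?F"
    by (rule finite_set_of_finite_funs) (use assms in auto)
  ultimately have "finite (Poly_Mapping.lookup ` Nset I d)"
    by (rule finite_subset)
  then show ?thesis
    by (rule finite_imageD) (simp add: inj_on_def)
qed

lemma riesz_mult_lpoly_eq_0:
  assumes "\<forall>\<alpha>\<in>Nset I d. \<forall>\<beta>\<in>Nset I d. loc_mat q y \<alpha> \<beta> = 0"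
  shows "riesz y (q * lpoly (Nset I (2 * d)) u) = 0"
  unfolding riesz_mult_lpoly
proof (rule sum.neutral, rule ballI)
  fix \<alpha> assume "\<alpha> \<in> Nset I (2 * d)"
  then obtain \<beta> \<gamma> where "\<alpha> = \<beta> + \<gamma>" "\<beta> \<in> Nset I d" "\<gamma> \<in> Nset I d"
    by (rule Nset_double_split)
  with assms show "u \<alpha> * loc_mat q y \<alpha> 0 = 0"
    by (simp add: loc_mat_add_zero)
qed

definition mon_eval :: "(nat \<Rightarrow> real) \<Rightarrow> mon \<Rightarrow> real" where
  "mon_eval x \<alpha> = (\<Prod>i\<in>Poly_Mapping.keys \<alpha>. x i ^ Poly_Mapping.lookup \<alpha> i)"

lemma mon_eval_superset:
  assumes "finite K" "Poly_Mapping.keys \<alpha> \<subseteq> K"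
  shows "mon_eval x \<alpha> = (\<Prod>i\<in>K. x i ^ Poly_Mapping.lookup \<alpha> i)"
  unfolding mon_eval_def
  by (rule prod.mono_neutral_left) (use assms in \<open>auto simp: not_in_keys_iff_lookup_eq_zero\<close>)

lemma mon_eval_add: "mon_eval x (\<alpha> + \<beta>) = mon_eval x \<alpha> * mon_eval x \<beta>"
proof -
  let ?K = "Poly_Mapping.keys \<alpha> \<union> Poly_Mapping.keys \<beta>"
  have "mon_eval x (\<alpha> + \<beta>) = (\<Prod>i\<in>?K. x i ^ Poly_Mapping.lookup (\<alpha> + \<beta>) i)"
    by (rule mon_eval_superset) (auto simp: keys_add_mon)
  also have "\<dots> = (\<Prod>i\<in>?K. x i ^ Poly_Mapping.lookup \<alpha> i) * (\<Prod>i\<in>?K. x i ^ Poly_Mapping.lookup \<beta> i)"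
    by (simp add: lookup_add power_add prod.distrib)
  also have "\<dots> = mon_eval x \<alpha> * mon_eval x \<beta>"
    by (subst (1 2) mon_eval_superset [of ?K]) auto
  finally show ?thesis .
qed

lemma mon_eval_zero [simp]: "mon_eval x 0 = 1"
  by (simp add: mon_eval_def)

lemma peval_eq_riesz: "peval q x = riesz (mon_eval x) q"
  by (simp add: peval_def riesz_def mon_eval_def)

lemma loc_mat_mon_eval: "loc_mat q (mon_eval x) \<alpha> \<beta> = mon_eval x (\<alpha> + \<beta>) * peval q x"
  unfolding loc_mat_def peval_eq_riesz riesz_def mon_eval_add
  by (simp add: sum_distrib_left algebra_simps)

lemma if_zero_mult:
  fixes x y :: "'a::mult_zero"
  shows "(if P then x else 0) * y = (if P then x * y else 0)"
    and "y * (if P then x else 0) = (if P then y * x else 0)"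
  by simp_all

lemma qform_add: "qform S (\<lambda>a b. A a b + B a b) v = qform S A v + qform S B v"
  by (simp add: qform_def algebra_simps sum.distrib)

lemma qform_unit_vector:
  assumes "finite S" "a \<in> S"
  shows "qform S A (\<lambda>c. if c = a then 1 else 0) = A a a"
  using assms by (simp add: qform_def if_zero_mult sum.delta sum.delta')

lemma psd_minus_id_diag_ge_one:
  assumes "psd S (\<lambda>a b. A a b - (if a = b then 1 else 0))" "finite S" "a \<in> S"
  shows "1 \<le> A a a"
proof -
  have "0 \<le> qform S (\<lambda>a b. A a b - (if a = b then 1 else 0)) (\<lambda>c. if c = a then 1 else 0)"
    using assms(1) by (simp add: psd_def)
  then show ?thesis
    using qform_unit_vector [OF assms(2,3)] by simp
qed

lemma pdef_imp_psd:
  assumes "pdef S A"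
  shows "psd S A"
  unfolding psd_def
proof (intro conjI allI)
  show "msym S A"
    using assms by (simp add: pdef_def)
  show "0 \<le> qform S A v" for v
  proof (cases "\<exists>a\<in>S. v a \<noteq> 0")
    case True
    then show ?thesis
      using assms by (simp add: pdef_def less_imp_le)
  next
    case False
    then show ?thesis
      by (simp add: qform_def)
  qed
qed

lemma pdef_diag:
  assumes fin: "finite S"
    and P: "\<And>a b. a \<in> S \<Longrightarrow> b \<in> S \<Longrightarrow> P a b = (if a = b then s a else 0)"
    and pos: "\<And>a. a \<in> S \<Longrightarrow> 0 < s a"
  shows "pdef S P"
  unfolding pdef_def
proof (intro conjI allI impI)
  show "msym S P"
    using P by (auto simp: msym_def)
  fix v :: "'a \<Rightarrow> real"
  assume "\<exists>a\<in>S. v a \<noteq> 0"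
  then obtain a where a: "a \<in> S" "v a \<noteq> 0"
    by blast
  have "qform S P v = (\<Sum>c\<in>S. s c * (v c)\<^sup>2)"
    unfolding qform_def using fin
    by (simp add: P power2_eq_square if_zero_mult sum.delta sum.delta' algebra_simps)
  also have "\<dots> > 0"
    using a pos fin by (intro sum_pos2 [of S a]) (auto simp: less_imp_le)
  finally show "qform S P v > 0" .
qed

lemma mmult_diag_left:
  assumes "finite S" "\<And>a b. a \<in> S \<Longrightarrow> b \<in> S \<Longrightarrow> P a b = (if a = b then s a else 0)" "a \<in> S"
  shows "mmult S P B a c = s a * B a c"
proof -
  have "mmult S P B a c = (\<Sum>b\<in>S. if a = b then s a * B b c else 0)"
    unfolding mmult_def using assms(2,3) by (intro sum.cong) auto
  then show ?thesis
    using assms(1,3) by simp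
qed

lemma mmult_diag_right:
  assumes "finite S" "\<And>a b. a \<in> S \<Longrightarrow> b \<in> S \<Longrightarrow> P a b = (if a = b then s a else 0)" "c \<in> S"
  shows "mmult S B P a c = B a c * s c"
proof -
  have "mmult S B P a c = (\<Sum>b\<in>S. if b = c then B a b * s c else 0)"
    unfolding mmult_def using assms(2,3) by (intro sum.cong) auto
  then show ?thesis
    using assms(1,3) by simp
qed

lemma mtrace_diag_congruence:
  assumes "finite S" "\<And>a b. a \<in> S \<Longrightarrow> b \<in> S \<Longrightarrow> P a b = (if a = b then s a else 0)"
  shows "mtrace S (mmult S (mmult S P D) P) = (\<Sum>a\<in>S. (s a)\<^sup>2 * D a a)"
  unfolding mtrace_def
  by (rule sum.cong) (simp_all add: mmult_diag_left mmult_diag_right assms power2_eq_square)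

lemma sum_diag:
  assumes "finite N" "mdiagonal N G"
  shows "(\<Sum>\<alpha>\<in>N. \<Sum>\<beta>\<in>N. G \<alpha> \<beta> * M \<alpha> \<beta>) = (\<Sum>\<alpha>\<in>N. G \<alpha> \<alpha> * M \<alpha> \<alpha>)"
proof (rule sum.cong [OF refl])
  fix \<alpha> assume "\<alpha> \<in> N"
  then have "(\<Sum>\<beta>\<in>N. G \<alpha> \<beta> * M \<alpha> \<beta>) = (\<Sum>\<beta>\<in>N. if \<alpha> = \<beta> then G \<alpha> \<alpha> * M \<alpha> \<alpha> else 0)"
    using assms(2) unfolding mdiagonal_def by (intro sum.cong) auto
  then show "(\<Sum>\<beta>\<in>N. G \<alpha> \<beta> * M \<alpha> \<beta>) = G \<alpha> \<alpha> * M \<alpha> \<alpha>"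
    using assms(1) \<open>\<alpha> \<in> N\<close> by simp
qed

lemma psd_add_pdef_kernel:
  assumes "psd S R" "pdef S Q"
    and ker: "\<And>a. a \<in> S \<Longrightarrow> (\<Sum>b\<in>S. (R a b + Q a b) * w b) = 0"
  shows "\<forall>a\<in>S. w a = 0"
proof (rule ccontr)
  assume "\<not> (\<forall>a\<in>S. w a = 0)"
  then have "0 < qform S Q w"
    using assms(2) by (auto simp: pdef_def)
  moreover have "0 \<le> qform S R w"
    using assms(1) by (simp add: psd_def)
  moreover have "qform S (\<lambda>a b. R a b + Q a b) w = (\<Sum>a\<in>S. w a * (\<Sum>b\<in>S. (R a b + Q a b) * w b))"
    by (simp add: qform_def sum_distrib_left mult.assoc)
  then have "qform S (\<lambda>a b. R a b + Q a b) w = 0"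
    by (simp add: ker)
  ultimately show False
    by (simp add: qform_add)
qed

text \<open>With t = sqrt (A b b) and w = R e_b - t e_b we get (R + t I) w = R^2 e_b - t^2 e_b
  = A e_b - A b b e_b = 0, and R + t I is positive definite.\<close>
lemma psd_sqrt_diag_column:
  assumes fin: "finite S" and diag: "mdiagonal S A" and pos: "0 < A b b"
    and "psd S R" and sq: "\<And>a c. a \<in> S \<Longrightarrow> c \<in> S \<Longrightarrow> mmult S R R a c = A a c"
    and "a \<in> S" "b \<in> S"
  shows "R a b = (if a = b then sqrt (A b b) else 0)"
proof -
  define t where "t = sqrt (A b b)"
  define w where "w c = R c b - (if c = b then t else 0)" for c
  have "0 < t"
    using pos by (simp add: t_def)
  then have "pdef S (\<lambda>c d. if c = d then t else 0)"
    by (intro pdef_diag [OF fin, of _ "\<lambda>_. t"]) simp_all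
  moreover have "(\<Sum>d\<in>S. (R c d + (if c = d then t else 0)) * w d) = 0" if "c \<in> S" for c
  proof -
    have "(\<Sum>d\<in>S. (R c d + (if c = d then t else 0)) * w d)
        = mmult S R R c b - (if c = b then t * t else 0)"
      using fin that \<open>b \<in> S\<close>
      by (simp add: w_def mmult_def algebra_simps sum.distrib sum_subtractf if_zero_mult
          sum.delta sum.delta')
    also have "\<dots> = 0"
      using sq [OF that \<open>b \<in> S\<close>] diag that \<open>b \<in> S\<close> pos by (auto simp: t_def mdiagonal_def)
    finally show ?thesis .
  qed
  ultimately have "w a = 0"
    using psd_add_pdef_kernel [OF \<open>psd S R\<close>] \<open>a \<in> S\<close> by blast
  then show ?thesis
    by (simp add: w_def t_def split: if_splits)
qed

lemma msqrt_diag: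
  assumes fin: "finite S" and diag: "mdiagonal S A" and pos: "\<And>a. a \<in> S \<Longrightarrow> 0 < A a a"
  shows "msqrt S A = (\<lambda>a b. if a \<in> S \<and> a = b then sqrt (A a a) else 0)"
  unfolding msqrt_def
proof (rule the_equality)
  let ?R = "\<lambda>a b. if a \<in> S \<and> a = b then sqrt (A a a) else 0"
  have R: "?R a b = (if a = b then sqrt (A a a) else 0)" if "a \<in> S" for a b
    using that by simp
  have "pdef S ?R"
    by (rule pdef_diag [OF fin R]) (simp_all add: pos)
  moreover have "mmult S ?R ?R a b = A a b" if "a \<in> S" "b \<in> S" for a b
    using that diag pos by (simp add: mmult_diag_left [OF fin R] less_imp_le mdiagonal_def)
  ultimately show "psd S ?R \<and> (\<forall>a\<in>S. \<forall>b\<in>S. mmult S ?R ?R a b = A a b)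
      \<and> (\<forall>a b. a \<notin> S \<or> b \<notin> S \<longrightarrow> ?R a b = 0)"
    by (auto simp: pdef_imp_psd)
next
  fix R
  assume R: "psd S R \<and> (\<forall>a\<in>S. \<forall>b\<in>S. mmult S R R a b = A a b)
      \<and> (\<forall>a b. a \<notin> S \<or> b \<notin> S \<longrightarrow> R a b = 0)"
  show "R = (\<lambda>a b. if a \<in> S \<and> a = b then sqrt (A a a) else 0)"
  proof (intro ext)
    fix a b
    show "R a b = (if a \<in> S \<and> a = b then sqrt (A a a) else 0)"
    proof (cases "a \<in> S \<and> b \<in> S")
      case True
      have "R a b = (if a = b then sqrt (A b b) else 0)"
        by (rule psd_sqrt_diag_column [OF fin diag pos]) (use R True in auto)
      then show ?thesis
        using True by simp
    next
      case False
      then show ?thesis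
        using R by auto
    qed
  qed
qed

definition bpoly :: "(nat \<Rightarrow> rpoly) \<Rightarrow> nat option \<Rightarrow> rpoly" where
  "bpoly g b = (case b of None \<Rightarrow> 1 | Some i \<Rightarrow> g i)"

lemma Dmat_diag_block: "Dmat g y (b, \<alpha>) (b, \<beta>) = loc_mat (bpoly g b) y \<alpha> \<beta>"
  by (cases b) (simp_all add: Dmat_def blockdiag_def bpoly_def)

lemma sum_blocks: "finite Jj \<Longrightarrow> (\<Sum>b\<in>blocks Jj. F b) = F None + (\<Sum>i\<in>Jj. F (Some i))"
  by (simp add: blocks_def sum.reindex)

lemma didx_eq_Sigma: "didx g Ij Jj k = Sigma (blocks Jj) (bidx g Ij Jj k)"
  by (auto simp: didx_def)

lemma finite_bidx: "finite Ij \<Longrightarrow> finite (bidx g Ij Jj k b)"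
  by (simp add: bidx_def finite_Nset)

lemma finite_didx: "finite Ij \<Longrightarrow> finite Jj \<Longrightarrow> finite (didx g Ij Jj k)"
  by (auto simp: didx_eq_Sigma blocks_def finite_bidx)

lemma lp_feasible_diag_ge_one:
  assumes "lp_feasible g h Ij Jj Wj k \<xi> G u" "finite Ij" "(b, \<alpha>) \<in> didx g Ij Jj k"
  shows "1 \<le> G b \<alpha> \<alpha>"
  using assms psd_minus_id_diag_ge_one [of "bidx g Ij Jj k b" "G b" \<alpha>]
  by (auto simp: lp_feasible_def didx_def finite_bidx)

lemma lp_feasible_sqrt_blockdiag:
  assumes feas: "lp_feasible g h Ij Jj Wj k \<xi> G u" and "finite Ij"
    and "x \<in> didx g Ij Jj k" "z \<in> didx g Ij Jj k"
  shows "blockdiag (\<lambda>b. msqrt (bidx g Ij Jj k b) (G b)) x z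
      = (if x = z then sqrt (G (fst x) (snd x) (snd x)) else 0)"
proof -
  obtain b \<alpha> b' \<beta> where x: "x = (b, \<alpha>)" and z: "z = (b', \<beta>)"
    by fastforce
  have "msqrt (bidx g Ij Jj k b) (G b) =
      (\<lambda>\<alpha> \<beta>. if \<alpha> \<in> bidx g Ij Jj k b \<and> \<alpha> = \<beta> then sqrt (G b \<alpha> \<alpha>) else 0)"
  proof (rule msqrt_diag)
    show "finite (bidx g Ij Jj k b)"
      by (rule finite_bidx [OF \<open>finite Ij\<close>])
    show "mdiagonal (bidx g Ij Jj k b) (G b)"
      using feas \<open>x \<in> _\<close> by (auto simp: lp_feasible_def didx_def x)
    show "0 < G b \<gamma> \<gamma>" if "\<gamma> \<in> bidx g Ij Jj k b" for \<gamma>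
      using lp_feasible_diag_ge_one [OF feas \<open>finite Ij\<close>, of b \<gamma>] \<open>x \<in> _\<close> that
      by (simp add: didx_def x)
  qed
  then show ?thesis
    using assms(3,4) by (auto simp: blockdiag_def didx_def x z)
qed

lemma lp_feasible_riesz:
  assumes feas: "lp_feasible g h Ij Jj Wj k \<xi> G u" and "finite Ij" "finite Jj"
    and hy: "\<forall>i\<in>Wj. \<forall>\<alpha>\<in>Nset Ij (k - hdeg (h i)). \<forall>\<beta>\<in>Nset Ij (k - hdeg (h i)).
      loc_mat (h i) y \<alpha> \<beta> = 0"
  shows "\<xi> * y 0 = (\<Sum>x\<in>didx g Ij Jj k. G (fst x) (snd x) (snd x) * Dmat g y x x)"
proof -
  let ?B = "bidx g Ij Jj k"
  have "\<xi> * y 0 = riesz y (pconst \<xi>)"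
    by simp
  also have "\<dots> = (\<Sum>b\<in>blocks Jj. riesz y (bpoly g b * qpoly (?B b) (G b)))
      + (\<Sum>i\<in>Wj. riesz y (h i * lpoly (Nset Ij (2 * (k - hdeg (h i)))) (u i)))"
    using feas \<open>finite Jj\<close>
    by (simp add: lp_feasible_def riesz_add riesz_sum sum_blocks bpoly_def bidx_def bdeg_def)
  also have "\<dots> = (\<Sum>b\<in>blocks Jj. \<Sum>\<alpha>\<in>?B b. \<Sum>\<beta>\<in>?B b. G b \<alpha> \<beta> * Dmat g y (b, \<alpha>) (b, \<beta>))"
    using hy by (simp add: riesz_mult_qpoly riesz_mult_lpoly_eq_0 Dmat_diag_block)
  also have "\<dots> = (\<Sum>b\<in>blocks Jj. \<Sum>\<alpha>\<in>?B b. G b \<alpha> \<alpha> * Dmat g y (b, \<alpha>) (b, \<alpha>))"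
    using feas \<open>finite Ij\<close>
    by (intro sum.cong refl sum_diag) (auto simp: lp_feasible_def finite_bidx)
  also have "\<dots> = (\<Sum>x\<in>didx g Ij Jj k. G (fst x) (snd x) (snd x) * Dmat g y x x)"
    using \<open>finite Ij\<close> \<open>finite Jj\<close>
    by (simp add: didx_eq_Sigma sum.Sigma blocks_def finite_bidx case_prod_unfold)
  finally show ?thesis .
qed

lemma lp_feasible_trace:
  assumes feas: "lp_feasible g h Ij Jj Wj k \<xi> G u" and "finite Ij" "finite Jj"
    and hy: "\<forall>i\<in>Wj. \<forall>\<alpha>\<in>Nset Ij (k - hdeg (h i)). \<forall>\<beta>\<in>Nset Ij (k - hdeg (h i)).
      loc_mat (h i) y \<alpha> \<beta> = 0"
  defines "D \<equiv> didx g Ij Jj k" and "P \<equiv> blockdiag (\<lambda>b. msqrt (bidx g Ij Jj k b) (G b))"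
  shows "mtrace D (mmult D (mmult D P (Dmat g y)) P) = \<xi> * y 0"
proof -
  have "mtrace D (mmult D (mmult D P (Dmat g y)) P) =
      (\<Sum>x\<in>D. (sqrt (G (fst x) (snd x) (snd x)))\<^sup>2 * Dmat g y x x)"
    unfolding D_def P_def
    by (rule mtrace_diag_congruence [OF finite_didx lp_feasible_sqrt_blockdiag [OF feas]])
      (simp_all add: assms)
  also have "\<dots> = (\<Sum>x\<in>D. G (fst x) (snd x) (snd x) * Dmat g y x x)"
  proof (intro sum.cong refl)
    fix x assume "x \<in> D"
    then have "1 \<le> G (fst x) (snd x) (snd x)"
      using lp_feasible_diag_ge_one [OF feas \<open>finite Ij\<close>] by (simp add: D_def)
    then show "(sqrt (G (fst x) (snd x) (snd x)))\<^sup>2 * Dmat g y x x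
        = G (fst x) (snd x) (snd x) * Dmat g y x x"
      by simp
  qed
  also have "\<dots> = \<xi> * y 0"
    unfolding D_def using lp_feasible_riesz [OF feas \<open>finite Ij\<close> \<open>finite Jj\<close> hy] by simp
  finally show ?thesis .
qed

lemma lp_feasible_value_pos:
  assumes feas: "lp_feasible g h Ij Jj Wj k \<xi> G u" and "finite Ij" "finite Jj"
    and gx: "\<forall>i\<in>Jj. 0 \<le> peval (g i) x" and hx: "\<forall>i\<in>Wj. peval (h i) x = 0"
  shows "0 < \<xi>"
proof -
  let ?D = "didx g Ij Jj k"
  let ?t = "\<lambda>z. G (fst z) (snd z) (snd z) * Dmat g (mon_eval x) z z"
  have nonneg: "0 \<le> ?t z" if "z \<in> ?D" for z
  proof -
    obtain b \<alpha> where z: "z = (b, \<alpha>)"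
      by fastforce
    have "0 \<le> peval (bpoly g b) x"
      using gx that by (auto simp: z didx_def blocks_def bpoly_def peval_eq_riesz)
    then have "0 \<le> Dmat g (mon_eval x) z z"
      by (simp add: z Dmat_diag_block loc_mat_mon_eval mon_eval_add)
    moreover have "1 \<le> G b \<alpha> \<alpha>"
      using lp_feasible_diag_ge_one [OF feas \<open>finite Ij\<close>] that by (simp add: z)
    ultimately show ?thesis
      by (simp add: z)
  qed
  have "(None, 0) \<in> ?D"
    by (simp add: didx_def blocks_def bidx_def bdeg_def Nset_def mdeg_def)
  then have "1 \<le> ?t (None, 0)"
    using lp_feasible_diag_ge_one [OF feas \<open>finite Ij\<close>, of None 0]
    by (simp add: Dmat_diag_block bpoly_def moment_mat_def)
  also have "\<dots> \<le> (\<Sum>z\<in>?D. ?t z)"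
    using \<open>(None, 0) \<in> ?D\<close> nonneg finite_didx [OF \<open>finite Ij\<close> \<open>finite Jj\<close>]
    by (intro member_le_sum) auto
  also have "\<dots> = \<xi>"
    using lp_feasible_riesz [OF feas \<open>finite Ij\<close> \<open>finite Jj\<close>, of "mon_eval x"] hx
    by (simp add: loc_mat_mon_eval)
  finally show ?thesis
    by simp
qed

lemma lp_feasible_constant_trace:
  assumes feas: "lp_feasible g h Ij Jj Wj k \<xi> G u" and "finite Ij" "finite Jj"
    and "\<exists>x. (\<forall>i\<in>Jj. 0 \<le> peval (g i) x) \<and> (\<forall>i\<in>Wj. peval (h i) x = 0)"
  defines "D \<equiv> didx g Ij Jj k" and "P \<equiv> blockdiag (\<lambda>b. msqrt (bidx g Ij Jj k b) (G b))"
  shows "0 < \<xi> \<and> pdef D P \<and> (\<forall>z\<in>D. \<forall>z'\<in>D. fst z \<noteq> fst z' \<longrightarrow> P z z' = 0)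
    \<and> (\<forall>y. (\<forall>i\<in>Wj. \<forall>\<alpha>\<in>Nset Ij (k - hdeg (h i)). \<forall>\<beta>\<in>Nset Ij (k - hdeg (h i)).
             loc_mat (h i) y \<alpha> \<beta> = 0) \<longrightarrow> y 0 = 1 \<longrightarrow>
           mtrace D (mmult D (mmult D P (Dmat g y)) P) = \<xi>)"
proof (intro conjI allI impI ballI)
  show "0 < \<xi>"
    using assms(4) lp_feasible_value_pos [OF feas assms(2,3)] by blast
  have P: "P z z' = (if z = z' then sqrt (G (fst z) (snd z) (snd z)) else 0)"
    if "z \<in> D" "z' \<in> D" for z z'
    using lp_feasible_sqrt_blockdiag [OF feas \<open>finite Ij\<close>] that by (simp add: D_def P_def)
  have "0 < sqrt (G (fst z) (snd z) (snd z))" if "z \<in> D" for z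
    using lp_feasible_diag_ge_one [OF feas \<open>finite Ij\<close>, of "fst z" "snd z"] that
    by (simp add: D_def)
  then show "pdef D P"
    using pdef_diag [OF finite_didx [OF \<open>finite Ij\<close> \<open>finite Jj\<close>] P] by (simp add: D_def)
  show "P z z' = 0" if "fst z \<noteq> fst z'" for z z'
    using that by (simp add: P_def blockdiag_def case_prod_unfold)
  show "mtrace D (mmult D (mmult D P (Dmat g y)) P) = \<xi>"
    if "\<forall>i\<in>Wj. \<forall>\<alpha>\<in>Nset Ij (k - hdeg (h i)). \<forall>\<beta>\<in>Nset Ij (k - hdeg (h i)).
        loc_mat (h i) y \<alpha> \<beta> = 0"
      and "y 0 = 1" for y
    using lp_feasible_trace [OF feas \<open>finite Ij\<close> \<open>finite Jj\<close> that(1)] that(2)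
    by (simp add: D_def P_def)
qed

theorem lemma3:
  fixes n m l p :: nat
    and f :: rpoly and g h :: "nat \<Rightarrow> rpoly"
    and I J W :: "nat \<Rightarrow> nat set"
    and \<xi> :: "nat \<Rightarrow> nat \<Rightarrow> real"
    and G :: "nat \<Rightarrow> nat \<Rightarrow> nat option \<Rightarrow> mon \<Rightarrow> mon \<Rightarrow> real"
    and u :: "nat \<Rightarrow> nat \<Rightarrow> nat \<Rightarrow> mon \<Rightarrow> real"
  assumes "pvars f \<subseteq> {..<n}"
    and "\<forall>i<m. pvars (g i) \<subseteq> {..<n}"
    and "\<forall>i<l. pvars (h i) \<subseteq> {..<n}"
    and "\<forall>j<p. I j \<subseteq> {..<n}"
    and "(\<Union>j<p. J j) = {..<m}" and "\<forall>j1<p. \<forall>j2<p. j1 \<noteq> j2 \<longrightarrow> J j1 \<inter> J j2 = {}"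
    and "(\<Union>j<p. W j) = {..<l}" and "\<forall>j1<p. \<forall>j2<p. j1 \<noteq> j2 \<longrightarrow> W j1 \<inter> W j2 = {}"
    and "\<forall>j<p. \<forall>i\<in>J j. pvars (g i) \<subseteq> I j"
    and "\<forall>j<p. \<forall>i\<in>W j. pvars (h i) \<subseteq> I j"
    and "\<exists>x. (\<forall>i<m. peval (g i) x \<ge> 0) \<and> (\<forall>i<l. peval (h i) x = 0)"
    and "\<forall>k\<ge>kmin f g m h l. \<forall>j<p.
           lp_feasible g h (I j) (J j) (W j) k (\<xi> k j) (G k j) (u k j)"
  shows "ctp_cs f g m h l p I J W \<xi>
           (\<lambda>k j. blockdiag (\<lambda>b. msqrt (bidx g (I j) (J j) k b) (G k j b)))"
  unfolding ctp_cs_def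
proof (intro allI impI lp_feasible_constant_trace)
  fix k j
  assume "kmin f g m h l \<le> k" "j < p"
  then show "lp_feasible g h (I j) (J j) (W j) k (\<xi> k j) (G k j) (u k j)"
    using assms(12) by blast
  show "finite (I j)"
    using assms(4) \<open>j < p\<close> finite_subset [OF _ finite_lessThan] by blast
  have "J j \<subseteq> {..<m}" "W j \<subseteq> {..<l}"
    using assms(5,7) \<open>j < p\<close> by blast+
  then show "finite (J j)"
    using finite_subset by blast
  show "\<exists>x. (\<forall>i\<in>J j. 0 \<le> peval (g i) x) \<and> (\<forall>i\<in>W j. peval (h i) x = 0)"
    using assms(11) \<open>J j \<subseteq> _\<close> \<open>W j \<subseteq> _\<close> by blast
qed

end
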